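(* Let $(X,d)$ be a compact metric space, $\Lambda$ a finite nonempty set, and $\mathcal{F}=\{X; f_{\lambda}\mid \lambda\in\Lambda\}$ a parameterized iterated function system of continuous maps $f_\lambda:X\to X$. If $\mathcal{F}$ is uniformly contracting, then $\mathcal{F}$ has the asymptotic average shadowing property.
   Context: For $\sigma=\{\lambda_0,\lambda_1,\dots\}\in\Lambda^{\mathbb{Z}_+}$ write $\mathcal{F}_{\sigma_n}=f_{\lambda_{n-1}}\circ\cdots\circ f_{\lambda_0}$ (with $\mathcal{F}_{\sigma_0}$ the identity). A sequence $\{x_i\}_{i\ge0}$ in $X$ is an asymptotic average pseudo-orbit of $\mathcal{F}$ if there is $\sigma=\{\lambda_0,\lambda_1,\dots\}\in\Lambda^{\mathbb{Z}_+}$ with $\lim_{n\to\infty}\frac1n\sum_{i=0}^{n-1}d(f_{\lambda_i}(x_i),x_{i+1})=0$. It is asymptotically shadowed in average by $z\in X$ if there is $\sigma\in\Lambda^{\mathbb{Z}_+}$ with $\lim_{n\to\infty}\frac1n\sum_{i=0}^{n-1}d(\mathcal{F}_{\sigma_i}(z),x_i)=0$. $\mathcal{F}$ has the asymptotic average shadowing property if every asymptotic average pseudo-orbit of $\mathcal{F}$ is asymptotically shadowed in average by some point of $X$. $\mathcal{F}$ is uniformly contracting if $\beta=\sup_{\lambda\in\Lambda}\sup_{x\neq y}\frac{d(f_\lambda(x),f_\lambda(y))}{d(x,y)}$ satisfies $\beta<1$. *)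

theory Defs
  imports "HOL-Analysis.Analysis"
begin

fun comp_seq :: "('l \<Rightarrow> 'a \<Rightarrow> 'a) \<Rightarrow> (nat \<Rightarrow> 'l) \<Rightarrow> nat \<Rightarrow> 'a \<Rightarrow> 'a" where
  "comp_seq f \<sigma> 0 = id"
| "comp_seq f \<sigma> (Suc n) = f (\<sigma> n) \<circ> comp_seq f \<sigma> n"

definition asymp_avg_pseudo_orbit ::
  "'a::metric_space set \<Rightarrow> 'l set \<Rightarrow> ('l \<Rightarrow> 'a \<Rightarrow> 'a) \<Rightarrow> (nat \<Rightarrow> 'a) \<Rightarrow> bool" where
  "asymp_avg_pseudo_orbit X L f x \<longleftrightarrow>
     (\<forall>i. x i \<in> X) \<and>
     (\<exists>\<sigma>. (\<forall>i. \<sigma> i \<in> L) \<and>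
        (\<lambda>n. (\<Sum>i<n. dist (f (\<sigma> i) (x i)) (x (Suc i))) / real n) \<longlonglongrightarrow> 0)"

definition asymp_shadowed_in_avg ::
  "'a::metric_space set \<Rightarrow> 'l set \<Rightarrow> ('l \<Rightarrow> 'a \<Rightarrow> 'a) \<Rightarrow> (nat \<Rightarrow> 'a) \<Rightarrow> 'a \<Rightarrow> bool" where
  "asymp_shadowed_in_avg X L f x z \<longleftrightarrow>
     (\<exists>\<sigma>. (\<forall>i. \<sigma> i \<in> L) \<and>
        (\<lambda>n. (\<Sum>i<n. dist (comp_seq f \<sigma> i z) (x i)) / real n) \<longlonglongrightarrow> 0)"

definition asymp_avg_shadowing_property ::
  "'a::metric_space set \<Rightarrow> 'l set \<Rightarrow> ('l \<Rightarrow> 'a \<Rightarrow> 'a) \<Rightarrow> bool" where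
  "asymp_avg_shadowing_property X L f \<longleftrightarrow>
     (\<forall>x. asymp_avg_pseudo_orbit X L f x \<longrightarrow> (\<exists>z\<in>X. asymp_shadowed_in_avg X L f x z))"

text \<open>The real supremum is meaningful only for bounded sets, so uniform contraction
  also records that each ratio set is bounded above (implicit in beta < 1 in the paper).
  beta = sup over l in L, sup over x \<noteq> y in X of d(f_l x, f_l y)/d(x,y).\<close>
definition contraction_const ::
  "'a::metric_space set \<Rightarrow> 'l set \<Rightarrow> ('l \<Rightarrow> 'a \<Rightarrow> 'a) \<Rightarrow> real" where
  "contraction_const X L f =
     (SUP l\<in>L. (SUP p\<in>{(x, y). x \<in> X \<and> y \<in> X \<and> x \<noteq> y}.
        dist (f l (fst p)) (f l (snd p)) / dist (fst p) (snd p)))"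

definition uniformly_contracting ::
  "'a::metric_space set \<Rightarrow> 'l set \<Rightarrow> ('l \<Rightarrow> 'a \<Rightarrow> 'a) \<Rightarrow> bool" where
  "uniformly_contracting X L f \<longleftrightarrow>
     (\<forall>l\<in>L. bdd_above ((\<lambda>p. dist (f l (fst p)) (f l (snd p)) / dist (fst p) (snd p)) `
                          {(x, y). x \<in> X \<and> y \<in> X \<and> x \<noteq> y})) \<and>
     contraction_const X L f < 1"

end

theory Submission
  imports Defs
begin

text \<open>Start the shadowing orbit at the first point of the pseudo-orbit. Contraction gives
  the recursive error estimate e(i+1) \<le> \<beta> e(i) + d(i) for the distances e(i) between the
  orbit and the pseudo-orbit, where d(i) are the jumps of the pseudo-orbit. Summing yields
  (1 - \<beta>) \<Sum>_{i<n} e(i) \<le> e(0) + \<Sum>_{i<n} d(i), so the Cesaro means of e vanish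
  whenever those of d do. Since that
  supremum is a junk value when X has a single point, \<beta> is replaced by max \<beta> 0.\<close>

lemma uniformly_contracting_dist_le:
  fixes X :: "'a::metric_space set" and f :: "'l \<Rightarrow> 'a \<Rightarrow> 'a"
  assumes "finite L" "uniformly_contracting X L f" "l \<in> L" "x \<in> X" "y \<in> X"
  shows "dist (f l x) (f l y) \<le> max (contraction_const X L f) 0 * dist x y"
proof (cases "x = y")
  case True
  then show ?thesis by simp
next
  case False
  let ?ratio = "\<lambda>p. dist (f l (fst p)) (f l (snd p)) / dist (fst p) (snd p)"
  let ?pairs = "{(x, y). x \<in> X \<and> y \<in> X \<and> x \<noteq> y}"
  have "bdd_above (?ratio ` ?pairs)"
    using assms(2,3) unfolding uniformly_contracting_def by auto
  moreover have "(x, y) \<in> ?pairs"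
    using assms False by auto
  ultimately have "?ratio (x, y) \<le> (SUP p\<in>?pairs. ?ratio p)"
    by (intro cSUP_upper)
  also have "\<dots> \<le> contraction_const X L f"
    unfolding contraction_const_def using assms(1,3) by (intro cSUP_upper) auto
  finally have "dist (f l x) (f l y) \<le> contraction_const X L f * dist x y"
    using False by (simp add: divide_le_eq)
  also have "\<dots> \<le> max (contraction_const X L f) 0 * dist x y"
    by (intro mult_right_mono) auto
  finally show ?thesis .
qed

lemma comp_seq_in:
  assumes "z \<in> X" "\<And>i. \<sigma> i \<in> L" "\<And>l. l \<in> L \<Longrightarrow> f l ` X \<subseteq> X"
  shows "comp_seq f \<sigma> n z \<in> X"
  using assms by (induction n) auto

lemma sum_le_of_linear_recurrence:
  fixes e d :: "nat \<Rightarrow> real"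
  assumes nonneg: "\<And>i. 0 \<le> e i" and rec: "\<And>i. e (Suc i) \<le> c * e i + d i"
  shows "(1 - c) * (\<Sum>i<n. e i) \<le> e 0 + (\<Sum>i<n. d i)"
proof -
  have "(\<Sum>i<n. e i) \<le> (\<Sum>i<Suc n. e i)"
    using nonneg by simp
  also have "\<dots> = e 0 + (\<Sum>i<n. e (Suc i))"
    by (simp only: sum.lessThan_Suc_shift)
  also have "\<dots> \<le> e 0 + (\<Sum>i<n. c * e i + d i)"
    using rec by (simp add: sum_mono)
  also have "\<dots> = e 0 + c * (\<Sum>i<n. e i) + (\<Sum>i<n. d i)"
    by (simp add: sum.distrib sum_distrib_left)
  finally show ?thesis
    by (simp add: algebra_simps)
qed

lemma cesaro_mean_tendsto_zero_of_linear_recurrence: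
  fixes e d :: "nat \<Rightarrow> real"
  assumes "c < 1" "\<And>i. 0 \<le> e i" "\<And>i. e (Suc i) \<le> c * e i + d i"
    and d_mean: "(\<lambda>n. (\<Sum>i<n. d i) / real n) \<longlonglongrightarrow> 0"
  shows "(\<lambda>n. (\<Sum>i<n. e i) / real n) \<longlonglongrightarrow> 0"
proof (rule tendsto_sandwich[OF _ _ tendsto_const])
  let ?bound = "\<lambda>n. (e 0 / real n + (\<Sum>i<n. d i) / real n) / (1 - c)"
  show "\<forall>\<^sub>F n in sequentially. 0 \<le> (\<Sum>i<n. e i) / real n"
    using assms(2) by (simp add: sum_nonneg)
  show "\<forall>\<^sub>F n in sequentially. (\<Sum>i<n. e i) / real n \<le> ?bound n"
  proof (intro always_eventually allI)
    fix n
    have "(\<Sum>i<n. e i) \<le> (e 0 + (\<Sum>i<n. d i)) / (1 - c)"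
      using sum_le_of_linear_recurrence[of e c d n, OF assms(2,3)] assms(1)
      by (simp add: le_divide_eq mult.commute)
    then have "(\<Sum>i<n. e i) / real n \<le> (e 0 + (\<Sum>i<n. d i)) / (1 - c) / real n"
      by (rule divide_right_mono) simp
    also have "\<dots> = ?bound n"
      by (simp add: add_divide_distrib mult.commute)
    finally show "(\<Sum>i<n. e i) / real n \<le> ?bound n" .
  qed
  show "?bound \<longlonglongrightarrow> 0"
    using tendsto_divide_zero[OF tendsto_add_zero[OF lim_const_over_n d_mean]] by simp
qed

theorem mainTheorem1:
  fixes X :: "'a::metric_space set" and L :: "'l set" and f :: "'l \<Rightarrow> 'a \<Rightarrow> 'a"
  assumes "compact X" and "X \<noteq> {}"
    and "finite L" and "L \<noteq> {}"
    and "\<And>l. l \<in> L \<Longrightarrow> f l ` X \<subseteq> X"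
    and "\<And>l. l \<in> L \<Longrightarrow> continuous_on X (f l)"
    and "uniformly_contracting X L f"
  shows "asymp_avg_shadowing_property X L f"
  unfolding asymp_avg_shadowing_property_def
proof (intro allI impI)
  fix x
  assume "asymp_avg_pseudo_orbit X L f x"
  then obtain \<sigma> where xX: "\<And>i. x i \<in> X" and \<sigma>L: "\<And>i. \<sigma> i \<in> L"
    and jumps: "(\<lambda>n. (\<Sum>i<n. dist (f (\<sigma> i) (x i)) (x (Suc i))) / real n) \<longlonglongrightarrow> 0"
    unfolding asymp_avg_pseudo_orbit_def by blast
  define y where "y i = comp_seq f \<sigma> i (x 0)" for i
  have yX: "y i \<in> X" for i
    unfolding y_def using comp_seq_in[OF xX \<sigma>L assms(5)] .
  define \<beta> where "\<beta> = max (contraction_const X L f) 0"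
  have "dist (y (Suc i)) (x (Suc i)) \<le> \<beta> * dist (y i) (x i) + dist (f (\<sigma> i) (x i)) (x (Suc i))"
    for i
    using dist_triangle[of "f (\<sigma> i) (y i)" "x (Suc i)" "f (\<sigma> i) (x i)"]
      uniformly_contracting_dist_le[OF assms(3,7) \<sigma>L[of i] yX[of i] xX[of i]]
    by (simp add: y_def \<beta>_def)
  moreover have "\<beta> < 1"
    using assms(7) unfolding uniformly_contracting_def \<beta>_def by simp
  ultimately have "(\<lambda>n. (\<Sum>i<n. dist (y i) (x i)) / real n) \<longlonglongrightarrow> 0"
    by (intro cesaro_mean_tendsto_zero_of_linear_recurrence[of \<beta>, OF _ _ _ jumps]) simp_all
  then have "asymp_shadowed_in_avg X L f x (x 0)"
    unfolding asymp_shadowed_in_avg_def y_def using \<sigma>L by blast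
  then show "\<exists>z\<in>X. asymp_shadowed_in_avg X L f x z"
    using xX by blast
qed

end
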